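(* Let $X$ be a topological space and $G\subset\mathrm{Hom}(X)$ a group of homeomorphisms such that the topology of pointwise convergence $\tau_p$ is an admissible group topology on $G$; $G$ carries $\tau_p$. Let $\mathcal U_X$ be an equiuniformity on $X$ for the action of $G$, and let $\mathcal U$ and $R_{\mathcal K}$ be the uniformities on $G$ defined below. If $\mathcal U=R_{\mathcal K}$ and $\mathcal U_X$ is totally bounded, then $G$ is Roelcke precompact.
   Context: Admissible group topology: $G$ is a topological group and the action on $X$ is continuous. $\tau_p$ has subbase $\{f\in G\mid f(x)\in O\}$, $x\in X$, $O$ open. An equiuniformity on $X$ is a compatible uniformity for which each $g\in G$ is uniformly continuous and for every uniform covering $u$ there are a neighbourhood $O$ of the identity in $G$ and a uniform covering $v$ with $\{OV\mid V\in v\}$ refining $u$. $\mathcal U$ is the uniformity on $G$ with base the coverings $\{\{h\in G\mid (g(x_k),h(x_k))\in\mathrm U,\ k=1,\dots,n\}\mid g\in G\}$, for $x_1,\dots,x_n\in X$ and $\mathrm U$ an entourage of $\mathcal U_X$. $R_{\mathcal K}$ is the uniformity on $G$ with base the coverings $\{Og\,\mathrm{St}_{x_1,\dots,x_n}\mid g\in G\}$, $O$ a neighbourhood of the identity, $x_1,\dots,x_n\in X$, where $\mathrm{St}_{x_1,\dots,x_n}$ is the pointwise stabilizer. The Roelcke uniformity $L\wedge R$ on a topological group is the greatest lower bound of the left and right uniformities (base: coverings $\{UgU\mid g\in G\}$, $U$ a neighbourhood of the identity); $G$ is Roelcke precompact if $L\wedge R$ is totally bounded. *)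

theory Defs
  imports "HOL-Analysis.Analysis"
begin

text \<open>Elements of G are maps on the whole type that are the identity outside topspace X;
  composition is (f*g)(x) = f(g(x)); the identity of the group is id.\<close>

definition hom_group :: "'a topology \<Rightarrow> ('a \<Rightarrow> 'a) set \<Rightarrow> bool" where
  "hom_group X G \<longleftrightarrow>
     (\<forall>g\<in>G. homeomorphic_map X X g \<and> (\<forall>x. x \<notin> topspace X \<longrightarrow> g x = x)) \<and>
     id \<in> G \<and> (\<forall>f\<in>G. \<forall>g\<in>G. f \<circ> g \<in> G) \<and>
     (\<forall>g\<in>G. \<exists>h\<in>G. h \<circ> g = id \<and> g \<circ> h = id)"

definition ginv :: "('a \<Rightarrow> 'a) set \<Rightarrow> ('a \<Rightarrow> 'a) \<Rightarrow> ('a \<Rightarrow> 'a)" where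
  "ginv G g = (THE h. h \<in> G \<and> h \<circ> g = id \<and> g \<circ> h = id)"

definition taup :: "'a topology \<Rightarrow> ('a \<Rightarrow> 'a) set \<Rightarrow> ('a \<Rightarrow> 'a) topology" where
  "taup X G = topology_generated_by
     (insert G {{f \<in> G. f x \<in> Ob} | x Ob. x \<in> topspace X \<and> openin X Ob})"

definition topological_group_on :: "('a \<Rightarrow> 'a) topology \<Rightarrow> ('a \<Rightarrow> 'a) set \<Rightarrow> bool" where
  "topological_group_on tp G \<longleftrightarrow> topspace tp = G \<and>
     continuous_map (prod_topology tp tp) tp (\<lambda>(f, g). f \<circ> g) \<and>
     continuous_map tp tp (ginv G)"

definition admissible_group_topology :: "'a topology \<Rightarrow> ('a \<Rightarrow> 'a) set \<Rightarrow> ('a \<Rightarrow> 'a) topology \<Rightarrow> bool" where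
  "admissible_group_topology X G tp \<longleftrightarrow> topological_group_on tp G \<and>
     continuous_map (prod_topology tp X) X (\<lambda>(g, x). g x)"

definition nbhd_id :: "('a \<Rightarrow> 'a) topology \<Rightarrow> ('a \<Rightarrow> 'a) set \<Rightarrow> bool" where
  "nbhd_id tp Ob \<longleftrightarrow> Ob \<subseteq> topspace tp \<and> (\<exists>W. openin tp W \<and> id \<in> W \<and> W \<subseteq> Ob)"

definition is_uniformity :: "'a set \<Rightarrow> ('a \<times> 'a) set set \<Rightarrow> bool" where
  "is_uniformity S E \<longleftrightarrow> E \<noteq> {} \<and> (\<forall>U\<in>E. Id_on S \<subseteq> U \<and> U \<subseteq> S \<times> S) \<and>
     (\<forall>U\<in>E. \<forall>V. U \<subseteq> V \<and> V \<subseteq> S \<times> S \<longrightarrow> V \<in> E) \<and>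
     (\<forall>U\<in>E. \<forall>V\<in>E. U \<inter> V \<in> E) \<and>
     (\<forall>U\<in>E. U\<inverse> \<in> E) \<and>
     (\<forall>U\<in>E. \<exists>V\<in>E. V O V \<subseteq> U)"

definition compatible_uniformity :: "'a topology \<Rightarrow> ('a \<times> 'a) set set \<Rightarrow> bool" where
  "compatible_uniformity X E \<longleftrightarrow> is_uniformity (topspace X) E \<and>
     (\<forall>Ob. openin X Ob \<longleftrightarrow> Ob \<subseteq> topspace X \<and> (\<forall>x\<in>Ob. \<exists>U\<in>E. U `` {x} \<subseteq> Ob))"

definition refines :: "'b set set \<Rightarrow> 'b set set \<Rightarrow> bool" where
  "refines v u \<longleftrightarrow> (\<forall>B\<in>v. \<exists>A\<in>u. B \<subseteq> A)"

definition ucovs :: "'a set \<Rightarrow> ('a \<times> 'a) set set \<Rightarrow> 'a set set set" where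
  "ucovs S E = {u. u \<subseteq> Pow S \<and> (\<exists>V\<in>E. refines {V `` {x} | x. x \<in> S} u)}"

definition ucovs_base :: "'b set \<Rightarrow> 'b set set set \<Rightarrow> 'b set set set" where
  "ucovs_base S B = {u. u \<subseteq> Pow S \<and> (\<exists>b\<in>B. refines b u)}"

definition totally_bounded_cov :: "'b set \<Rightarrow> 'b set set set \<Rightarrow> bool" where
  "totally_bounded_cov S C \<longleftrightarrow> (\<forall>u\<in>C. \<exists>v\<subseteq>u. finite v \<and> S \<subseteq> \<Union>v)"

definition setmul :: "('a \<Rightarrow> 'a) set \<Rightarrow> ('a \<Rightarrow> 'a) set \<Rightarrow> ('a \<Rightarrow> 'a) set" where
  "setmul A B = {a \<circ> b | a b. a \<in> A \<and> b \<in> B}"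

definition equiuniformity :: "'a topology \<Rightarrow> ('a \<Rightarrow> 'a) set \<Rightarrow> ('a \<times> 'a) set set \<Rightarrow> bool" where
  "equiuniformity X G E \<longleftrightarrow> compatible_uniformity X E \<and>
     (\<forall>g\<in>G. \<forall>U\<in>E. \<exists>V\<in>E. \<forall>(x, y)\<in>V. (g x, g y) \<in> U) \<and>
     (\<forall>u\<in>ucovs (topspace X) E. \<exists>Ob v. nbhd_id (taup X G) Ob \<and> v \<in> ucovs (topspace X) E \<and>
        refines {{g x | g x. g \<in> Ob \<and> x \<in> V} | V. V \<in> v} u)"

definition pointwise_stabilizer :: "('a \<Rightarrow> 'a) set \<Rightarrow> 'a set \<Rightarrow> ('a \<Rightarrow> 'a) set" where
  "pointwise_stabilizer G F = {h \<in> G. \<forall>x\<in>F. h x = x}"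

definition U_base :: "'a topology \<Rightarrow> ('a \<Rightarrow> 'a) set \<Rightarrow> ('a \<times> 'a) set set \<Rightarrow> ('a \<Rightarrow> 'a) set set set" where
  "U_base X G E = {{{h \<in> G. \<forall>x\<in>F. (g x, h x) \<in> U} | g. g \<in> G} | F U.
      finite F \<and> F \<subseteq> topspace X \<and> U \<in> E}"

definition RK_base :: "'a topology \<Rightarrow> ('a \<Rightarrow> 'a) set \<Rightarrow> ('a \<Rightarrow> 'a) set set set" where
  "RK_base X G = {{setmul (setmul Ob {g}) (pointwise_stabilizer G F) | g. g \<in> G} | Ob F.
      nbhd_id (taup X G) Ob \<and> finite F \<and> F \<subseteq> topspace X}"

definition roelcke_base :: "('a \<Rightarrow> 'a) topology \<Rightarrow> ('a \<Rightarrow> 'a) set \<Rightarrow> ('a \<Rightarrow> 'a) set set set" where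
  "roelcke_base tp G = {{setmul (setmul W {g}) W | g. g \<in> G} | W. nbhd_id tp W}"

definition roelcke_precompact :: "('a \<Rightarrow> 'a) topology \<Rightarrow> ('a \<Rightarrow> 'a) set \<Rightarrow> bool" where
  "roelcke_precompact tp G \<longleftrightarrow> totally_bounded_cov G (ucovs_base G (roelcke_base tp G))"

end

theory Submission
  imports Defs
begin

text \<open>A Roelcke cover \<open>{W g W}\<close> is refined by the \<open>R\<^sub>K\<close>-cover \<open>{W g St\<^sub>F}\<close>, because every
  \<open>\<tau>\<^sub>p\<close>-neighbourhood \<open>W\<close> of the identity contains a pointwise stabilizer \<open>St\<^sub>F\<close>. So if
  \<open>R\<^sub>K = \<U>\<close>, it suffices to show that \<open>\<U>\<close> is totally bounded. A basic \<open>\<U>\<close>-cover is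
  given by a finite \<open>F \<subseteq> X\<close> and an entourage \<open>U\<close>; taking a finite \<open>V\<close>-net \<open>Z\<close> of \<open>X\<close> with
  \<open>V\<close> symmetric and \<open>V \<circ> V \<subseteq> U\<close>, the elements of \<open>G\<close> fall into the finitely many classes
  \<open>F \<rightarrow> Z\<close> of their \<open>V\<close>-approximations on \<open>F\<close>, and one representative per class yields
  a finite subcover.\<close>

lemma openin_taup_contains_agreement_set:
  assumes "openin (taup X G) W" "f \<in> W"
  shows "\<exists>F. finite F \<and> F \<subseteq> topspace X \<and> {h \<in> G. \<forall>x\<in>F. h x = f x} \<subseteq> W"
proof -
  have "generate_topology_on
          (insert G {{f \<in> G. f x \<in> Ob} | x Ob. x \<in> topspace X \<and> openin X Ob}) W"
    using assms(1) unfolding taup_def by (simp add: openin_topology_generated_by_iff)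
  then show ?thesis using assms(2)
  proof (induction arbitrary: f)
    case Empty
    then show ?case by simp
  next
    case (Int a b)
    from Int.prems have "f \<in> a" "f \<in> b" by auto
    obtain F1 where "finite F1" "F1 \<subseteq> topspace X" "{h \<in> G. \<forall>x\<in>F1. h x = f x} \<subseteq> a"
      using Int.IH(1)[OF \<open>f \<in> a\<close>] by blast
    moreover obtain F2 where
      "finite F2" "F2 \<subseteq> topspace X" "{h \<in> G. \<forall>x\<in>F2. h x = f x} \<subseteq> b"
      using Int.IH(2)[OF \<open>f \<in> b\<close>] by blast
    ultimately show ?case
      by (intro exI[of _ "F1 \<union> F2"]) auto
  next
    case (UN K)
    from UN.prems obtain k where "k \<in> K" "f \<in> k" by auto
    with UN.IH[OF this] show ?case by blast
  next
    case (Basis s)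
    show ?case
    proof (cases "s = G")
      case True
      then show ?thesis by (intro exI[of _ "{}"]) auto
    next
      case False
      with Basis obtain x Ob where "x \<in> topspace X" "s = {f \<in> G. f x \<in> Ob}" by auto
      with Basis.prems show ?thesis by (intro exI[of _ "{x}"]) auto
    qed
  qed
qed

lemma nbhd_id_contains_pointwise_stabilizer:
  assumes "nbhd_id (taup X G) W"
  obtains F where "finite F" "F \<subseteq> topspace X" "pointwise_stabilizer G F \<subseteq> W"
proof -
  obtain W0 where "openin (taup X G) W0" "id \<in> W0" "W0 \<subseteq> W"
    using assms unfolding nbhd_id_def by blast
  then show ?thesis
    using openin_taup_contains_agreement_set[of X G W0 id] that
    unfolding pointwise_stabilizer_def by fastforce
qed

lemma setmul_mono_right: "B \<subseteq> B' \<Longrightarrow> setmul A B \<subseteq> setmul A B'"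
  unfolding setmul_def by blast

lemma roelcke_ucovs_subset_RK_ucovs:
  "ucovs_base G (roelcke_base (taup X G) G) \<subseteq> ucovs_base G (RK_base X G)"
proof
  fix u assume "u \<in> ucovs_base G (roelcke_base (taup X G) G)"
  then obtain W where u: "u \<subseteq> Pow G" and W: "nbhd_id (taup X G) W"
    and refines_u: "refines {setmul (setmul W {g}) W | g. g \<in> G} u"
    unfolding ucovs_base_def roelcke_base_def by blast
  obtain F where F: "finite F" "F \<subseteq> topspace X" and St: "pointwise_stabilizer G F \<subseteq> W"
    using nbhd_id_contains_pointwise_stabilizer[OF W] .
  define c where "c = {setmul (setmul W {g}) (pointwise_stabilizer G F) | g. g \<in> G}"
  have "c \<in> RK_base X G"
    unfolding c_def RK_base_def using W F by blast
  moreover have "refines c u"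
    unfolding refines_def
  proof
    fix C assume "C \<in> c"
    then obtain g where "g \<in> G" "C = setmul (setmul W {g}) (pointwise_stabilizer G F)"
      unfolding c_def by blast
    then have "C \<subseteq> setmul (setmul W {g}) W"
      using setmul_mono_right[OF St] by blast
    moreover obtain A where "A \<in> u" "setmul (setmul W {g}) W \<subseteq> A"
      using refines_u \<open>g \<in> G\<close> unfolding refines_def by blast
    ultimately show "\<exists>A\<in>u. C \<subseteq> A" by blast
  qed
  ultimately show "u \<in> ucovs_base G (RK_base X G)"
    using u unfolding ucovs_base_def by blast
qed

lemma totally_bounded_cov_ucovs_base:
  assumes "\<And>b. b \<in> B \<Longrightarrow> \<exists>v\<subseteq>b. finite v \<and> S \<subseteq> \<Union>v"
  shows "totally_bounded_cov S (ucovs_base S B)"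
  unfolding totally_bounded_cov_def
proof
  fix u assume "u \<in> ucovs_base S B"
  then obtain b where "b \<in> B" and "refines b u"
    unfolding ucovs_base_def by blast
  from assms[OF \<open>b \<in> B\<close>] obtain v where v: "v \<subseteq> b" "finite v" "S \<subseteq> \<Union>v"
    by blast
  with \<open>refines b u\<close> have "\<forall>V\<in>v. \<exists>A. A \<in> u \<and> V \<subseteq> A"
    unfolding refines_def by blast
  then obtain enlarge where enlarge: "\<forall>V\<in>v. enlarge V \<in> u \<and> V \<subseteq> enlarge V"
    by (metis bchoice)
  have "enlarge ` v \<subseteq> u" "finite (enlarge ` v)"
    using v(2) enlarge by auto
  moreover have "S \<subseteq> \<Union>(enlarge ` v)"
    using v(3) enlarge by blast
  ultimately show "\<exists>v'\<subseteq>u. finite v' \<and> S \<subseteq> \<Union>v'"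
    by blast
qed

lemma uniformity_subset: "is_uniformity S E \<Longrightarrow> U \<in> E \<Longrightarrow> U \<subseteq> S \<times> S"
  unfolding is_uniformity_def by metis

lemma uniformity_converse: "is_uniformity S E \<Longrightarrow> U \<in> E \<Longrightarrow> U\<inverse> \<in> E"
  unfolding is_uniformity_def by metis

lemma uniformity_Int: "is_uniformity S E \<Longrightarrow> U \<in> E \<Longrightarrow> V \<in> E \<Longrightarrow> U \<inter> V \<in> E"
  unfolding is_uniformity_def by metis

lemma uniformity_half: "is_uniformity S E \<Longrightarrow> U \<in> E \<Longrightarrow> \<exists>V\<in>E. V O V \<subseteq> U"
  unfolding is_uniformity_def by metis

lemma totally_bounded_finite_net:
  assumes "is_uniformity S E" "totally_bounded_cov S (ucovs S E)" "U \<in> E"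
  obtains Z where "finite Z" "\<And>p. p \<in> S \<Longrightarrow> \<exists>z\<in>Z. (z, p) \<in> U"
proof -
  have "U \<subseteq> S \<times> S"
    using uniformity_subset[OF assms(1,3)] .
  then have "{U `` {x} | x. x \<in> S} \<subseteq> Pow S"
    by blast
  moreover have "refines {U `` {x} | x. x \<in> S} {U `` {x} | x. x \<in> S}"
    unfolding refines_def by blast
  ultimately have "{U `` {x} | x. x \<in> S} \<in> ucovs S E"
    using assms(3) unfolding ucovs_def by blast
  with assms(2) have "\<exists>v\<subseteq>{U `` {x} | x. x \<in> S}. finite v \<and> S \<subseteq> \<Union>v"
    unfolding totally_bounded_cov_def by (rule bspec)
  then obtain v where v: "v \<subseteq> {U `` {x} | x. x \<in> S}" "finite v" "S \<subseteq> \<Union>v"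
    by (elim exE conjE) (rule that)
  then have "v \<subseteq> (\<lambda>x. U `` {x}) ` S" by blast
  then obtain Z where Z: "Z \<subseteq> S" "finite Z" "v = (\<lambda>x. U `` {x}) ` Z"
    using finite_subset_image[OF \<open>finite v\<close>] by blast
  have "\<exists>z\<in>Z. (z, p) \<in> U" if "p \<in> S" for p
  proof -
    from v(3) \<open>p \<in> S\<close> obtain V where "V \<in> v" "p \<in> V" by blast
    with Z(3) obtain z where "z \<in> Z" "p \<in> U `` {z}" by blast
    then show ?thesis by blast
  qed
  from Z(2) this show ?thesis by (rule that)
qed

lemma totally_bounded_pointwise_finite_net:
  assumes unif: "is_uniformity S E" and tb: "totally_bounded_cov S (ucovs S E)"
    and "U \<in> E" "finite F" and maps: "\<And>h x. h \<in> G \<Longrightarrow> x \<in> F \<Longrightarrow> h x \<in> S"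
  obtains Gs where "finite Gs" "Gs \<subseteq> G" "\<And>h. h \<in> G \<Longrightarrow> \<exists>g\<in>Gs. \<forall>x\<in>F. (g x, h x) \<in> U"
proof -
  obtain V where "V \<in> E" and VV: "V O V \<subseteq> U"
    using uniformity_half[OF unif \<open>U \<in> E\<close>] by blast
  then have "V \<inter> V\<inverse> \<in> E"
    using uniformity_Int uniformity_converse unif by blast
  then obtain Z where "finite Z" and net: "\<And>p. p \<in> S \<Longrightarrow> \<exists>z\<in>Z. (z, p) \<in> V \<inter> V\<inverse>"
    by (rule totally_bounded_finite_net[OF unif tb]) (rule that)
  obtain near where near: "\<And>p. p \<in> S \<Longrightarrow> near p \<in> Z \<and> (near p, p) \<in> V \<inter> V\<inverse>"
    using net by metis
  define snap where "snap h = restrict (near \<circ> h) F" for h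
  have "snap ` G \<subseteq> F \<rightarrow>\<^sub>E Z"
    using near maps unfolding snap_def by auto
  then have "finite (snap ` G)"
    using \<open>finite F\<close> \<open>finite Z\<close> by (meson finite_PiE finite_subset)
  then obtain Gs where Gs: "Gs \<subseteq> G" "finite Gs" "snap ` Gs = snap ` G"
    using finite_subset_image[of "snap ` G" snap G] by blast
  have "\<exists>g\<in>Gs. \<forall>x\<in>F. (g x, h x) \<in> U" if "h \<in> G" for h
  proof -
    obtain g where "g \<in> Gs" "snap g = snap h"
      using Gs(3) \<open>h \<in> G\<close> by (metis imageE imageI)
    then have "g \<in> G" using Gs(1) by blast
    have "(g x, h x) \<in> V O V" if "x \<in> F" for x
    proof -
      have "near (g x) = near (h x)"
        using \<open>snap g = snap h\<close> \<open>x \<in> F\<close> unfolding snap_def by (metis comp_apply restrict_apply')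
      moreover have "(g x, near (g x)) \<in> V" "(near (h x), h x) \<in> V"
        using near[OF maps[OF \<open>g \<in> G\<close> \<open>x \<in> F\<close>]] near[OF maps[OF \<open>h \<in> G\<close> \<open>x \<in> F\<close>]]
        by auto
      ultimately show ?thesis by auto
    qed
    with \<open>g \<in> Gs\<close> VV show ?thesis by blast
  qed
  from Gs(2,1) this show ?thesis by (rule that)
qed

lemma hom_group_maps_topspace:
  "hom_group X G \<Longrightarrow> g \<in> G \<Longrightarrow> x \<in> topspace X \<Longrightarrow> g x \<in> topspace X"
  unfolding hom_group_def by (metis homeomorphic_imp_surjective_map image_eqI)

lemma totally_bounded_U_uniformity:
  assumes "hom_group X G" "is_uniformity (topspace X) E"
    and "totally_bounded_cov (topspace X) (ucovs (topspace X) E)"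
  shows "totally_bounded_cov G (ucovs_base G (U_base X G E))"
proof (rule totally_bounded_cov_ucovs_base)
  fix b assume "b \<in> U_base X G E"
  then obtain F U where b: "b = {{h \<in> G. \<forall>x\<in>F. (g x, h x) \<in> U} | g. g \<in> G}"
    and "finite F" "F \<subseteq> topspace X" "U \<in> E"
    unfolding U_base_def by blast
  moreover obtain Gs where "finite Gs" "Gs \<subseteq> G"
    and "\<And>h. h \<in> G \<Longrightarrow> \<exists>g\<in>Gs. \<forall>x\<in>F. (g x, h x) \<in> U"
    using totally_bounded_pointwise_finite_net[OF assms(2,3) \<open>U \<in> E\<close> \<open>finite F\<close>, of G]
      hom_group_maps_topspace[OF assms(1)] \<open>F \<subseteq> topspace X\<close> by blast
  ultimately show "\<exists>v\<subseteq>b. finite v \<and> G \<subseteq> \<Union>v"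
    by (intro exI[of _ "(\<lambda>g. {h \<in> G. \<forall>x\<in>F. (g x, h x) \<in> U}) ` Gs"]) blast
qed

theorem corollary2p2:
  fixes X :: "'a topology" and G :: "('a \<Rightarrow> 'a) set" and E :: "('a \<times> 'a) set set"
  assumes "hom_group X G"
    and "admissible_group_topology X G (taup X G)"
    and "equiuniformity X G E"
    and "ucovs_base G (U_base X G E) = ucovs_base G (RK_base X G)"
    and "totally_bounded_cov (topspace X) (ucovs (topspace X) E)"
  shows "roelcke_precompact (taup X G) G"
proof -
  have "is_uniformity (topspace X) E"
    using assms(3) unfolding equiuniformity_def compatible_uniformity_def by blast
  then have "totally_bounded_cov G (ucovs_base G (RK_base X G))"
    using totally_bounded_U_uniformity[OF assms(1) _ assms(5)] assms(4) by simp
  then show ?thesis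
    using roelcke_ucovs_subset_RK_ucovs[of G X]
    unfolding roelcke_precompact_def totally_bounded_cov_def by blast
qed

end
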